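(* Let $f$ be a periodic traveling wave (librational or rotational, of speed $c$ with $c^2\ne 1$). Then $\sigma(\mathrm{P})=\sigma(\mathrm{P})^*=-\sigma(\mathrm{P})=-\sigma(\mathrm{P})^*$, where $S^*=\{\bar\lambda:\lambda\in S\}$ and $-S=\{-\lambda:\lambda\in S\}$.
   Context: A traveling wave of speed $c$ ($c^2\neq1$) of $u_{tt}-u_{xx}+\sin u=0$ is a real solution $f$ of $(c^2-1)f''+\sin f=0$, with energy $E$ defined by $\tfrac12(c^2-1)(f')^2+1-\cos f=E$. Periodic traveling waves are the librational ones ($0<E<2$) and rotational ones ($E<0$ if $c^2<1$, $E>2$ if $c^2>1$). Set $\gamma=1/(c^2-1)$. $\sigma(\mathrm{P})$ is the set of $\lambda\in\mathbb{C}$ for which $p''-2c\gamma\lambda p'+\gamma(\lambda^2+\cos f(z))p=0$ has a nontrivial solution bounded on $\mathbb{R}$. *)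

theory Defs
  imports "HOL-Analysis.Analysis"
begin

definition traveling_wave :: "real \<Rightarrow> (real \<Rightarrow> real) \<Rightarrow> bool" where
  "traveling_wave c f \<longleftrightarrow> c\<^sup>2 \<noteq> 1 \<and>
     (\<exists>f1 f2. \<forall>z. (f has_real_derivative f1 z) (at z) \<and>
                  (f1 has_real_derivative f2 z) (at z) \<and>
                  (c\<^sup>2 - 1) * f2 z + sin (f z) = 0)"

text \<open>Energy E = (1/2)(c^2-1)(f')^2 + 1 - cos f (constant along solutions; evaluated at z = 0).\<close>
definition tw_energy :: "real \<Rightarrow> (real \<Rightarrow> real) \<Rightarrow> real" where
  "tw_energy c f = (c\<^sup>2 - 1) / 2 * (deriv f 0)\<^sup>2 + 1 - cos (f 0)"

definition librational_tw :: "real \<Rightarrow> (real \<Rightarrow> real) \<Rightarrow> bool" where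
  "librational_tw c f \<longleftrightarrow> traveling_wave c f \<and> 0 < tw_energy c f \<and> tw_energy c f < 2"

definition rotational_tw :: "real \<Rightarrow> (real \<Rightarrow> real) \<Rightarrow> bool" where
  "rotational_tw c f \<longleftrightarrow> traveling_wave c f \<and>
     ((c\<^sup>2 < 1 \<and> tw_energy c f < 0) \<or> (c\<^sup>2 > 1 \<and> tw_energy c f > 2))"

definition periodic_tw :: "real \<Rightarrow> (real \<Rightarrow> real) \<Rightarrow> bool" where
  "periodic_tw c f \<longleftrightarrow> librational_tw c f \<or> rotational_tw c f"

definition specP :: "real \<Rightarrow> (real \<Rightarrow> real) \<Rightarrow> complex set" where
  "specP c f = {l. \<exists>p p1 p2 :: real \<Rightarrow> complex.
      (\<forall>z. (p has_vector_derivative p1 z) (at z) \<and>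
           (p1 has_vector_derivative p2 z) (at z) \<and>
           p2 z - 2 * of_real c * of_real (1 / (c\<^sup>2 - 1)) * l * p1 z
             + of_real (1 / (c\<^sup>2 - 1)) * (l\<^sup>2 + of_real (cos (f z))) * p z = 0) \<and>
      bounded (range p) \<and> (\<exists>z. p z \<noteq> 0)}"

end

theory Submission
  imports Defs
begin

text \<open>The spectral problem has real coefficients apart from \<open>\<lambda>\<close>, so conjugating an eigenfunction
  gives one for \<open>\<lambda>\<^sup>*\<close>; and if \<open>cos f\<close> is even about some \<open>z\<^sub>0\<close>, then \<open>p (2 z\<^sub>0 - z)\<close> is an
  eigenfunction for \<open>-\<lambda>\<close>, since the reflection flips the sign of the first-order term only.
  Such a \<open>z\<^sub>0\<close> exists for every traveling wave, periodic or not. Writing the wave equation as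
  \<open>f'' = -\<gamma> sin f\<close>, the solution must meet a zero of \<open>sin\<close>: otherwise \<open>f\<close> stays strictly between
  two consecutive multiples of \<open>\<pi>\<close>, so \<open>f''\<close> has a strict constant sign, and a strictly concave
  function on \<open>\<real>\<close> cannot be bounded below. If \<open>sin (f z\<^sub>0) = 0\<close>, then \<open>2 f z\<^sub>0 - f (2 z\<^sub>0 - z)\<close>
  solves the same equation with the same Cauchy data at \<open>z\<^sub>0\<close>, so by uniqueness
  \<open>f (2 z\<^sub>0 - z) = 2 f z\<^sub>0 - f z\<close>, and \<open>cos f\<close> is even about \<open>z\<^sub>0\<close>.\<close>

lemma abs_sin_diff_le: "\<bar>sin (x::real) - sin y\<bar> \<le> \<bar>x - y\<bar>"
proof -
  have "\<bar>sin x - sin y\<bar> = 2 * \<bar>sin ((x - y) / 2)\<bar> * \<bar>cos ((x + y) / 2)\<bar>"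
    by (simp add: sin_diff_sin abs_mult)
  also have "\<dots> \<le> 2 * \<bar>(x - y) / 2\<bar> * 1"
    by (intro mult_mono abs_sin_x_le_abs_x) auto
  finally show ?thesis by simp
qed

lemma sin_two_mult_minus: "sin (y::real) = 0 \<Longrightarrow> sin (2 * y - x) = - sin x"
  by (simp add: sin_diff sin_double cos_double_sin)

lemma cos_two_mult_minus: "sin (y::real) = 0 \<Longrightarrow> cos (2 * y - x) = cos x"
  by (simp add: cos_diff sin_double cos_double_sin)

lemma continuous_avoiding_value_same_side:
  fixes g :: "real \<Rightarrow> real"
  assumes "continuous_on UNIV g" and "\<And>z. g z \<noteq> a"
  shows "g z < a \<longleftrightarrow> g w < a"
proof -
  have "connected (range g)"
    using assms(1) by (rule connected_continuous_image) simp
  hence "a \<notin> {g z..g w}" "a \<notin> {g w..g z}"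
    using assms(2) by (auto dest: connectedD_interval[of _ "g z" "g w"] connectedD_interval[of _ "g w" "g z"])
  thus ?thesis using assms(2)[of z] assms(2)[of w] by force
qed

lemma below_tangent_if_deriv2_nonpos:
  fixes f f1 f2 :: "real \<Rightarrow> real"
  assumes f1: "\<And>z. (f has_real_derivative f1 z) (at z)"
    and f2: "\<And>z. (f1 has_real_derivative f2 z) (at z)" and "\<And>z. f2 z \<le> 0"
  shows "f z \<le> f z0 + f1 z0 * (z - z0)"
proof -
  have antimono: "f1 y \<le> f1 x" if "x \<le> y" for x y
    using DERIV_nonpos_imp_nonincreasing[OF that] f2 assms(3) by blast
  show ?thesis
  proof (cases z0 z rule: linorder_cases)
    case less
    then obtain \<xi> where "z0 < \<xi>" "f z - f z0 = (z - z0) * f1 \<xi>"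
      using MVT2[where f=f and f'=f1] f1 by blast
    moreover have "(z - z0) * f1 \<xi> \<le> (z - z0) * f1 z0"
      using antimono[of z0 \<xi>] less \<open>z0 < \<xi>\<close> by (intro mult_left_mono) auto
    ultimately show ?thesis by (simp add: algebra_simps)
  next
    case greater
    then obtain \<xi> where "\<xi> < z0" "f z0 - f z = (z0 - z) * f1 \<xi>"
      using MVT2[where f=f and f'=f1] f1 by blast
    moreover have "(z0 - z) * f1 z0 \<le> (z0 - z) * f1 \<xi>"
      using antimono[of \<xi> z0] greater \<open>\<xi> < z0\<close> by (intro mult_left_mono) auto
    ultimately show ?thesis by (simp add: algebra_simps)
  qed simp
qed

lemma unbounded_below_if_deriv2_neg:
  fixes f f1 f2 :: "real \<Rightarrow> real"
  assumes f1: "\<And>z. (f has_real_derivative f1 z) (at z)"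
    and f2: "\<And>z. (f1 has_real_derivative f2 z) (at z)" and neg: "\<And>z. f2 z < 0"
  shows "\<exists>z. f z < m"
proof -
  have "f1 1 < f1 0"
    using DERIV_neg_imp_decreasing[of 0 1 f1] f2 neg by force
  then obtain z0 where z0: "f1 z0 \<noteq> 0"
    by (metis order_less_irrefl)
  define z where "z = z0 - (f z0 - m + 1) / f1 z0"
  have "f z \<le> f z0 + f1 z0 * (z - z0)"
    using below_tangent_if_deriv2_nonpos[OF f1 f2] neg less_imp_le by blast
  also have "\<dots> = m - 1"
    using z0 by (simp add: z_def)
  finally show ?thesis by (intro exI[of _ z]) simp
qed

lemma gronwall_zero_forward:
  fixes w w' :: "real \<Rightarrow> real"
  assumes dw: "\<And>z. (w has_real_derivative w' z) (at z)"
    and nonneg: "\<And>z. 0 \<le> w z" and bound: "\<And>z. \<bar>w' z\<bar> \<le> K * w z"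
    and "w z0 = 0" and "z0 \<le> z"
  shows "w z = 0"
proof -
  have "w z * exp (- K * z) \<le> w z0 * exp (- K * z0)"
  proof (rule DERIV_nonpos_imp_nonincreasing[OF \<open>z0 \<le> z\<close>])
    fix x
    have "((\<lambda>x. w x * exp (- K * x)) has_real_derivative
            (w' x - K * w x) * exp (- K * x)) (at x)"
      by (auto intro!: derivative_eq_intros dw simp: algebra_simps)
    moreover have "(w' x - K * w x) * exp (- K * x) \<le> 0"
      using bound[of x] by (intro mult_nonpos_nonneg) auto
    ultimately show "\<exists>y. ((\<lambda>x. w x * exp (- K * x)) has_real_derivative y) (at x) \<and> y \<le> 0"
      by blast
  qed
  with \<open>w z0 = 0\<close> nonneg[of z] show ?thesis
    by (simp add: mult_le_0_iff)
qed

lemma gronwall_zero: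
  fixes w w' :: "real \<Rightarrow> real"
  assumes dw: "\<And>z. (w has_real_derivative w' z) (at z)"
    and nonneg: "\<And>z. 0 \<le> w z" and bound: "\<And>z. \<bar>w' z\<bar> \<le> K * w z"
    and "w z0 = 0"
  shows "w z = 0"
proof (cases "z0 \<le> z")
  case True
  with assms show ?thesis by (rule gronwall_zero_forward)
next
  case False
  have "((\<lambda>z. w (- z)) has_real_derivative w' (- z) * - 1) (at z)" for z
    by (rule DERIV_chain2[OF dw]) (auto intro!: derivative_eq_intros)
  from gronwall_zero_forward[OF this, of K "- z0" "- z"] False assms(2-4)
  show ?thesis by simp
qed

lemma energy_derivative_bound:
  fixes u v e L :: real
  assumes e: "\<bar>e\<bar> \<le> L * \<bar>u\<bar>" and "0 \<le> L"
  shows "\<bar>2 * u * v + 2 * v * e\<bar> \<le> (1 + L) * (u\<^sup>2 + v\<^sup>2)"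
proof -
  have "\<bar>2 * u * v + 2 * v * e\<bar> \<le> 2 * \<bar>u\<bar> * \<bar>v\<bar> + 2 * \<bar>v\<bar> * \<bar>e\<bar>"
    using abs_triangle_ineq[of "2 * u * v" "2 * v * e"] by (simp add: abs_mult)
  also have "\<dots> \<le> 2 * \<bar>u\<bar> * \<bar>v\<bar> + 2 * \<bar>v\<bar> * (L * \<bar>u\<bar>)"
    using e by (simp add: mult_left_mono)
  also have "\<dots> = (1 + L) * (2 * \<bar>u\<bar> * \<bar>v\<bar>)"
    by (simp add: algebra_simps)
  also have "\<dots> \<le> (1 + L) * (u\<^sup>2 + v\<^sup>2)"
    using sum_squares_bound[of "\<bar>u\<bar>" "\<bar>v\<bar>"] \<open>0 \<le> L\<close> by (simp add: mult_left_mono)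
  finally show ?thesis .
qed

lemma autonomous_second_order_unique:
  fixes F f f1 g g1 :: "real \<Rightarrow> real"
  assumes lip: "\<And>x y. \<bar>F x - F y\<bar> \<le> L * \<bar>x - y\<bar>"
    and f1: "\<And>z. (f has_real_derivative f1 z) (at z)"
    and f2: "\<And>z. (f1 has_real_derivative F (f z)) (at z)"
    and g1: "\<And>z. (g has_real_derivative g1 z) (at z)"
    and g2: "\<And>z. (g1 has_real_derivative F (g z)) (at z)"
    and "f z0 = g z0" and "f1 z0 = g1 z0"
  shows "f z = g z"
proof -
  define u where "u z = f z - g z" for z
  define v where "v z = f1 z - g1 z" for z
  define e where "e z = F (f z) - F (g z)" for z
  have du: "(u has_real_derivative v z) (at z)" for z
    unfolding u_def[abs_def] v_def by (rule DERIV_diff[OF f1 g1])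
  have dv: "(v has_real_derivative e z) (at z)" for z
    unfolding v_def[abs_def] e_def by (rule DERIV_diff[OF f2 g2])
  have dw: "((\<lambda>z. (u z)\<^sup>2 + (v z)\<^sup>2) has_real_derivative 2 * u z * v z + 2 * v z * e z) (at z)"
    for z
    using DERIV_add[OF DERIV_power[OF du, of 2] DERIV_power[OF dv, of 2]]
    by (simp add: algebra_simps)
  have "0 \<le> L" using lip[of 1 0] by simp
  have bound: "\<bar>2 * u z * v z + 2 * v z * e z\<bar> \<le> (1 + L) * ((u z)\<^sup>2 + (v z)\<^sup>2)" for z
    using energy_derivative_bound[OF lip \<open>0 \<le> L\<close>] unfolding e_def u_def .
  have init: "(u z0)\<^sup>2 + (v z0)\<^sup>2 = 0" using assms(6,7) by (simp add: u_def v_def)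
  have "(u z)\<^sup>2 + (v z)\<^sup>2 = 0"
    by (rule gronwall_zero[OF dw _ bound init]) simp
  thus ?thesis by (simp add: u_def)
qed

lemma pendulum_reflection:
  fixes f f1 :: "real \<Rightarrow> real"
  assumes f1: "\<And>z. (f has_real_derivative f1 z) (at z)"
    and f2: "\<And>z. (f1 has_real_derivative - k * sin (f z)) (at z)"
    and "sin (f z0) = 0"
  shows "f (2 * z0 - z) = 2 * f z0 - f z"
proof -
  define g where "g z = 2 * f z0 - f (2 * z0 - z)" for z
  define g1 where "g1 z = f1 (2 * z0 - z)" for z
  have reflect: "((\<lambda>z. 2 * z0 - z) has_real_derivative - 1) (at z)" for z
    by (auto intro!: derivative_eq_intros)
  have dg: "(g has_real_derivative g1 z) (at z)" for z
    using DERIV_diff[OF DERIV_const DERIV_chain2[OF f1 reflect], of "2 * f z0"]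
    by (simp add: g_def[abs_def] g1_def)
  have dg1: "(g1 has_real_derivative - k * sin (g z)) (at z)" for z
    using DERIV_chain2[OF f2 reflect] sin_two_mult_minus[OF assms(3)]
    by (simp add: g_def g1_def[abs_def])
  have lip: "\<bar>- k * sin x - - k * sin y\<bar> \<le> \<bar>k\<bar> * \<bar>x - y\<bar>" for x y
    using abs_sin_diff_le[of x y] by (simp add: abs_mult right_diff_distrib[symmetric] mult_left_mono)
  have "f (2 * z0 - z) = g (2 * z0 - z)"
    by (rule autonomous_second_order_unique[where F = "\<lambda>x. - k * sin x", OF lip f1 f2 dg dg1, of z0])
      (simp_all add: g_def g1_def)
  thus ?thesis by (simp add: g_def)
qed

lemma pendulum_reaches_sin_zero:
  fixes f f1 :: "real \<Rightarrow> real"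
  assumes "k \<noteq> 0"
    and f1: "\<And>z. (f has_real_derivative f1 z) (at z)"
    and f2: "\<And>z. (f1 has_real_derivative - k * sin (f z)) (at z)"
  shows "\<exists>z0. sin (f z0) = 0"
proof (rule ccontr)
  assume "\<nexists>z0. sin (f z0) = 0"
  hence nz: "sin (f z) \<noteq> 0" for z by blast
  have cont: "continuous_on UNIV f"
    using f1 by (meson DERIV_isCont continuous_at_imp_continuous_on)
  define n where "n = \<lfloor>f 0 / pi\<rfloor>"
  have "of_int n * pi \<le> f 0" "f 0 < (of_int n + 1) * pi"
    unfolding n_def by (simp_all add: floor_divide_lower floor_divide_upper)
  have sin_multiple_pi: "sin (of_int m * pi) = 0" for m :: int
    by (simp add: sin_zero_iff_int2)
  have avoid: "f z \<noteq> of_int m * pi" for z m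
    using nz[of z] sin_multiple_pi[of m] by auto
  have lower: "of_int n * pi < f z" for z
    using continuous_avoiding_value_same_side[OF cont avoid[of _ n], of z 0]
      \<open>of_int n * pi \<le> f 0\<close> avoid[of z n] by linarith
  have upper: "f z < (of_int n + 1) * pi" for z
    using continuous_avoiding_value_same_side[OF cont avoid[of _ "n + 1"], of z 0]
      \<open>f 0 < (of_int n + 1) * pi\<close> by simp
  have "continuous_on UNIV (\<lambda>z. - k * sin (f z))"
    by (intro continuous_intros cont)
  hence "- k * sin (f z) < 0 \<longleftrightarrow> - k * sin (f 0) < 0" for z
    by (rule continuous_avoiding_value_same_side) (use nz \<open>k \<noteq> 0\<close> in simp)
  moreover have "- k * sin (f z) \<noteq> 0" for z
    using nz \<open>k \<noteq> 0\<close> by simp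
  ultimately have "(\<forall>z. - k * sin (f z) < 0) \<or> (\<forall>z. 0 < - k * sin (f z))"
    by (meson linorder_neqE_linordered_idom)
  thus False
  proof
    assume "\<forall>z. - k * sin (f z) < 0"
    then obtain z where "f z < of_int n * pi"
      using unbounded_below_if_deriv2_neg[OF f1 f2] by blast
    with lower[of z] show False by simp
  next
    assume pos: "\<forall>z. 0 < - k * sin (f z)"
    have "((\<lambda>z. - f z) has_real_derivative - f1 z) (at z)"
      and "((\<lambda>z. - f1 z) has_real_derivative k * sin (f z)) (at z)"
      and "k * sin (f z) < 0" for z
      using DERIV_minus[OF f1] DERIV_minus[OF f2] pos by simp_all
    from unbounded_below_if_deriv2_neg[OF this]
    obtain z where "- f z < - ((of_int n + 1) * pi)" by blast
    with upper[of z] show False by simp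
  qed
qed

lemma traveling_wave_cos_symmetric:
  assumes "traveling_wave c f"
  shows "\<exists>z0. \<forall>z. cos (f (2 * z0 - z)) = cos (f z)"
proof -
  define k where "k = 1 / (c\<^sup>2 - 1)"
  obtain f1 f2 where "c\<^sup>2 \<noteq> 1" and f1: "\<And>z. (f has_real_derivative f1 z) (at z)"
    and f2: "\<And>z. (f1 has_real_derivative f2 z) (at z)"
    and eq: "\<And>z. (c\<^sup>2 - 1) * f2 z + sin (f z) = 0"
    using assms unfolding traveling_wave_def by blast
  have "f2 z = - k * sin (f z)" for z
    using eq[of z] \<open>c\<^sup>2 \<noteq> 1\<close> by (simp add: k_def field_simps)
  hence f2': "\<And>z. (f1 has_real_derivative - k * sin (f z)) (at z)"
    using f2 by metis
  have "k \<noteq> 0" using \<open>c\<^sup>2 \<noteq> 1\<close> by (simp add: k_def)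
  then obtain z0 where "sin (f z0) = 0"
    using pendulum_reaches_sin_zero[OF _ f1 f2'] by blast
  hence "cos (f (2 * z0 - z)) = cos (f z)" for z
    using pendulum_reflection[OF f1 f2'] cos_two_mult_minus by simp
  then show ?thesis by blast
qed

definition spectral_ode ::
    "real \<Rightarrow> (real \<Rightarrow> real) \<Rightarrow> complex \<Rightarrow> (real \<Rightarrow> complex) \<Rightarrow> (real \<Rightarrow> complex) \<Rightarrow> (real \<Rightarrow> complex) \<Rightarrow> bool"
  where "spectral_ode c q l p p1 p2 \<longleftrightarrow>
    (\<forall>z. (p has_vector_derivative p1 z) (at z) \<and> (p1 has_vector_derivative p2 z) (at z) \<and>
         p2 z - 2 * of_real c * of_real (1 / (c\<^sup>2 - 1)) * l * p1 z
           + of_real (1 / (c\<^sup>2 - 1)) * (l\<^sup>2 + of_real (q z)) * p z = 0)"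

lemma specP_iff:
  "l \<in> specP c f \<longleftrightarrow>
     (\<exists>p p1 p2. spectral_ode c (\<lambda>z. cos (f z)) l p p1 p2 \<and> bounded (range p) \<and> (\<exists>z. p z \<noteq> 0))"
  by (simp add: specP_def spectral_ode_def)

lemma spectral_ode_cnj:
  assumes "spectral_ode c q l p p1 p2"
  shows "spectral_ode c q (cnj l) (\<lambda>z. cnj (p z)) (\<lambda>z. cnj (p1 z)) (\<lambda>z. cnj (p2 z))"
  unfolding spectral_ode_def
proof
  fix z
  from assms have "(p has_vector_derivative p1 z) (at z)" "(p1 has_vector_derivative p2 z) (at z)"
    and "cnj (p2 z - 2 * of_real c * of_real (1 / (c\<^sup>2 - 1)) * l * p1 z
           + of_real (1 / (c\<^sup>2 - 1)) * (l\<^sup>2 + of_real (q z)) * p z) = 0"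
    unfolding spectral_ode_def by simp_all
  then show "((\<lambda>z. cnj (p z)) has_vector_derivative cnj (p1 z)) (at z) \<and>
      ((\<lambda>z. cnj (p1 z)) has_vector_derivative cnj (p2 z)) (at z) \<and>
      cnj (p2 z) - 2 * of_real c * of_real (1 / (c\<^sup>2 - 1)) * cnj l * cnj (p1 z)
        + of_real (1 / (c\<^sup>2 - 1)) * ((cnj l)\<^sup>2 + of_real (q z)) * cnj (p z) = 0"
    by (simp only: complex_cnj_add complex_cnj_diff complex_cnj_mult complex_cnj_complex_of_real
          complex_cnj_power complex_cnj_numeral has_vector_derivative_cnj)
qed

lemma spectral_ode_reflect:
  assumes "spectral_ode c q l p p1 p2" and even: "\<And>z. q (2 * z0 - z) = q z"
  shows "spectral_ode c q (- l) (\<lambda>z. p (2 * z0 - z)) (\<lambda>z. - p1 (2 * z0 - z)) (\<lambda>z. p2 (2 * z0 - z))"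
  unfolding spectral_ode_def
proof
  fix z
  define w where "w = 2 * z0 - z"
  from assms(1) have p1: "(p has_vector_derivative p1 w) (at w)"
    and p2: "(p1 has_vector_derivative p2 w) (at w)"
    and eq: "p2 w - 2 * of_real c * of_real (1 / (c\<^sup>2 - 1)) * l * p1 w
           + of_real (1 / (c\<^sup>2 - 1)) * (l\<^sup>2 + of_real (q w)) * p w = 0"
    unfolding spectral_ode_def by simp_all
  have reflect: "((\<lambda>z::real. 2 * z0 - z) has_vector_derivative - 1) (at z)"
    by (auto intro!: derivative_eq_intros simp: has_real_derivative_iff_has_vector_derivative[symmetric])
  have "((\<lambda>z. p (2 * z0 - z)) has_vector_derivative - p1 w) (at z)"
    using vector_diff_chain_at[OF reflect, of p "p1 w"] p1 by (simp add: w_def o_def)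
  moreover have "((\<lambda>z. - p1 (2 * z0 - z)) has_vector_derivative p2 w) (at z)"
    using has_vector_derivative_minus[OF vector_diff_chain_at[OF reflect, of p1 "p2 w"]] p2
    by (simp add: w_def o_def)
  moreover have "q z = q w" using even[of z] by (simp add: w_def)
  ultimately show "((\<lambda>z. p (2 * z0 - z)) has_vector_derivative - p1 (2 * z0 - z)) (at z) \<and>
      ((\<lambda>z. - p1 (2 * z0 - z)) has_vector_derivative p2 (2 * z0 - z)) (at z) \<and>
      p2 (2 * z0 - z) - 2 * of_real c * of_real (1 / (c\<^sup>2 - 1)) * - l * - p1 (2 * z0 - z)
        + of_real (1 / (c\<^sup>2 - 1)) * ((- l)\<^sup>2 + of_real (q z)) * p (2 * z0 - z) = 0"
    using eq by (simp add: w_def)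
qed

lemma cnj_mem_specP:
  assumes "l \<in> specP c f"
  shows "cnj l \<in> specP c f"
proof -
  obtain p p1 p2 z where ode: "spectral_ode c (\<lambda>z. cos (f z)) l p p1 p2"
    and "bounded (range p)" and "p z \<noteq> 0"
    using assms unfolding specP_iff by blast
  have "range (\<lambda>z. cnj (p z)) = cnj ` range p" by auto
  with \<open>bounded (range p)\<close> have "bounded (range (\<lambda>z. cnj (p z)))"
    by (metis bounded_linear_image bounded_linear_cnj)
  with spectral_ode_cnj[OF ode] \<open>p z \<noteq> 0\<close> show ?thesis
    unfolding specP_iff by fastforce
qed

lemma uminus_mem_specP:
  assumes "l \<in> specP c f" and even: "\<And>z. cos (f (2 * z0 - z)) = cos (f z)"
  shows "- l \<in> specP c f"
proof -
  obtain p p1 p2 z where ode: "spectral_ode c (\<lambda>z. cos (f z)) l p p1 p2"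
    and "bounded (range p)" and "p z \<noteq> 0"
    using assms(1) unfolding specP_iff by blast
  have "range (\<lambda>z. p (2 * z0 - z)) \<subseteq> range p" by auto
  with \<open>bounded (range p)\<close> have "bounded (range (\<lambda>z. p (2 * z0 - z)))"
    by (rule bounded_subset)
  moreover have "\<exists>w. p (2 * z0 - w) \<noteq> 0"
    using \<open>p z \<noteq> 0\<close> by (intro exI[of _ "2 * z0 - z"]) simp
  ultimately have reflected: "spectral_ode c (\<lambda>z. cos (f z)) (- l)
      (\<lambda>z. p (2 * z0 - z)) (\<lambda>z. - p1 (2 * z0 - z)) (\<lambda>z. p2 (2 * z0 - z)) \<and>
    bounded (range (\<lambda>z. p (2 * z0 - z))) \<and> (\<exists>w. p (2 * z0 - w) \<noteq> 0)"
    using spectral_ode_reflect[OF ode even] by simp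
  then show ?thesis
    unfolding specP_iff by (intro exI) (rule reflected)
qed

lemma image_eq_if_involution:
  assumes "\<And>x. g (g x) = x" and "g ` S \<subseteq> S"
  shows "g ` S = S"
proof
  show "S \<subseteq> g ` S"
  proof
    fix x assume "x \<in> S"
    then have "g (g x) \<in> g ` (g ` S)" by (intro imageI)
    with assms show "x \<in> g ` S" by auto
  qed
qed (fact assms(2))

theorem proposition1p7:
  fixes c :: real and f :: "real \<Rightarrow> real"
  assumes "periodic_tw c f"
  shows "specP c f = cnj ` specP c f \<and> specP c f = uminus ` specP c f
         \<and> specP c f = (\<lambda>l. - cnj l) ` specP c f"
proof -
  have "traveling_wave c f"
    using assms unfolding periodic_tw_def librational_tw_def rotational_tw_def by blast
  then obtain z0 where even: "\<And>z. cos (f (2 * z0 - z)) = cos (f z)"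
    using traveling_wave_cos_symmetric by blast
  have "cnj ` specP c f \<subseteq> specP c f" "uminus ` specP c f \<subseteq> specP c f"
    "(\<lambda>l. - cnj l) ` specP c f \<subseteq> specP c f"
    using cnj_mem_specP uminus_mem_specP[of _ c f z0, OF _ even] by blast+
  then show ?thesis
    by (simp add: image_eq_if_involution)
qed

end
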